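(* There exists a permutation of the positive integers that does not contain any 4-term arithmetic progression with odd common difference as a subsequence.
   Context: A permutation of the positive integers is a sequence $(a_1,a_2,\ldots)$ in which every positive integer appears exactly once. A sequence contains a $k$-term arithmetic progression with common difference $d\neq 0$ as a subsequence if there are indices $i_1<i_2<\cdots<i_k$ with $a_{i_{m+1}} - a_{i_m} = d$ for all $1\le m<k$. The difference $d$ may be positive or negative. *)

theory Defs
  imports Main
begin

definition perm_pos :: "(nat \<Rightarrow> nat) \<Rightarrow> bool" where
  "perm_pos a \<longleftrightarrow> bij_betw a {1..} {1..}"

definition has_ap_subseq :: "(nat \<Rightarrow> nat) \<Rightarrow> nat \<Rightarrow> int \<Rightarrow> bool" where
  "has_ap_subseq a k d \<longleftrightarrow>
     (\<exists>i :: nat \<Rightarrow> nat. (\<forall>m \<in> {1..k}. i m \<ge> 1) \<and>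
        (\<forall>m. 1 \<le> m \<and> m < k \<longrightarrow> i m < i (m + 1) \<and>
              int (a (i (m + 1))) - int (a (i m)) = d))"

end

theory Submission
  imports Defs
begin

(* Call a sequence a "parity separated" if, at positions >= 1,
   (i)  its odd values occur in increasing order, and
   (ii) every odd value occurring after an even value e exceeds 2e.
   In an arithmetic progression with odd difference d the parities alternate, so a
   4-term one contains three consecutive terms x, y = x + d, z = x + 2d with x, z odd
   and y even.  By (i) x < z, hence d > 0; by (ii) z > 2y = 2z - 2d, hence x = z - 2d < 0,
   impossible for natural numbers.
   It remains to exhibit a parity separated permutation: the sequence
   1, 3, 2, 5, 7, 4, 9, 11, 6, ..., i.e. a(3k+1) = 4k+1, a(3k+2) = 4k+3, a(3k+3) = 2k+2,
   listing two odd numbers, then one even number, each kind in increasing order. *)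

definition parity_separated :: "(nat \<Rightarrow> nat) \<Rightarrow> bool" where
  "parity_separated a \<longleftrightarrow>
     (\<forall>p q. 1 \<le> p \<longrightarrow> p < q \<longrightarrow> odd (a q) \<longrightarrow>
        (if odd (a p) then a p < a q else 2 * a p < a q))"

lemma parity_separated_no_odd_even_odd:
  assumes sep: "parity_separated a"
    and pos: "1 \<le> p" "p < q" "q < r"
    and odd_p: "odd (a p)" and even_q: "even (a q)" and odd_r: "odd (a r)"
    and step1: "int (a q) - int (a p) = d" and step2: "int (a r) - int (a q) = d"
  shows False
proof -
  have "a p < a r"
    using sep[unfolded parity_separated_def, rule_format, of p r] pos odd_p odd_r by simp
  moreover have "2 * a q < a r"
    using sep[unfolded parity_separated_def, rule_format, of q r] pos even_q odd_r by simp
  ultimately show False using step1 step2 by linarith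
qed

lemma odd_step_flips_parity:
  assumes "odd d" "int y - int x = d"
  shows "odd y \<longleftrightarrow> even x"
proof -
  have "int y = int x + d" using assms(2) by linarith
  then have "even (int y) \<longleftrightarrow> odd (int x)" using assms(1) by simp
  then show ?thesis by simp
qed

(* Hence a parity separated sequence has no 4-term progression with odd difference:
   the first term is odd (use terms 1, 2, 3) or even (use terms 2, 3, 4). *)
lemma parity_separated_no_odd_ap:
  assumes sep: "parity_separated a" and "odd d"
  shows "\<not> has_ap_subseq a 4 d"
proof
  assume "has_ap_subseq a 4 d"
  then obtain i where pos: "\<forall>m :: nat \<in> {1..4}. 1 \<le> i m"
    and steps: "\<forall>m :: nat. 1 \<le> m \<and> m < 4 \<longrightarrow> i m < i (m + 1) \<and>
                     int (a (i (m + 1))) - int (a (i m)) = d"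
    unfolding has_ap_subseq_def by blast
  have "1 \<le> i 1" "1 \<le> i 2" using pos by auto
  have s1: "i 1 < i 2" "int (a (i 2)) - int (a (i 1)) = d"
    and s2: "i 2 < i 3" "int (a (i 3)) - int (a (i 2)) = d"
    and s3: "i 3 < i 4" "int (a (i 4)) - int (a (i 3)) = d"
    using steps[rule_format, of 1] steps[rule_format, of 2] steps[rule_format, of 3]
    by (simp_all add: eval_nat_numeral)
  have flip1: "odd (a (i 2)) \<longleftrightarrow> even (a (i 1))"
    using odd_step_flips_parity[OF \<open>odd d\<close> s1(2)] .
  have flip2: "odd (a (i 3)) \<longleftrightarrow> even (a (i 2))"
    using odd_step_flips_parity[OF \<open>odd d\<close> s2(2)] .
  have flip3: "odd (a (i 4)) \<longleftrightarrow> even (a (i 3))"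
    using odd_step_flips_parity[OF \<open>odd d\<close> s3(2)] .
  show False
  proof (cases "odd (a (i 1))")
    case True
    with flip1 flip2 have "even (a (i 2))" "odd (a (i 3))" by simp_all
    with True show False
      using parity_separated_no_odd_even_odd[OF sep \<open>1 \<le> i 1\<close> s1(1) s2(1) _ _ _ s1(2) s2(2)]
      by blast
  next
    case False
    with flip1 flip2 flip3 have "odd (a (i 2))" "even (a (i 3))" "odd (a (i 4))" by simp_all
    then show False
      using parity_separated_no_odd_even_odd[OF sep \<open>1 \<le> i 2\<close> s2(1) s3(1) _ _ _ s2(2) s3(2)]
      by blast
  qed
qed

definition two_odd_one_even :: "nat \<Rightarrow> nat" where
  "two_odd_one_even n =
     (if n mod 3 = 1 then 4 * (n div 3) + 1
      else if n mod 3 = 2 then 4 * (n div 3) + 3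
      else 2 * (n div 3))"

definition two_odd_one_even_inv :: "nat \<Rightarrow> nat" where
  "two_odd_one_even_inv v =
     (if v mod 4 = 1 then 3 * (v div 4) + 1
      else if v mod 4 = 3 then 3 * (v div 4) + 2
      else 3 * (v div 2))"

lemma two_odd_one_even_values:
  "two_odd_one_even (3 * k + 1) = 4 * k + 1"
  "two_odd_one_even (3 * k + 2) = 4 * k + 3"
  "two_odd_one_even (3 * k + 3) = 2 * k + 2"
proof -
  have "(3 * k + 1) mod 3 = 1" "(3 * k + 2) mod 3 = 2" "(3 * k + 3) mod 3 = 0"
    "(3 * k + 1) div 3 = k" "(3 * k + 2) div 3 = k" "(3 * k + 3) div 3 = k + 1"
    by presburger+
  then show "two_odd_one_even (3 * k + 1) = 4 * k + 1"
    "two_odd_one_even (3 * k + 2) = 4 * k + 3"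
    "two_odd_one_even (3 * k + 3) = 2 * k + 2"
    unfolding two_odd_one_even_def by simp_all
qed

lemma two_odd_one_even_inv_values:
  "two_odd_one_even_inv (4 * k + 1) = 3 * k + 1"
  "two_odd_one_even_inv (4 * k + 3) = 3 * k + 2"
  "two_odd_one_even_inv (2 * k + 2) = 3 * k + 3"
proof -
  have "(4 * k + 1) mod 4 = 1" "(4 * k + 3) mod 4 = 3"
    "(2 * k + 2) mod 4 \<noteq> 1" "(2 * k + 2) mod 4 \<noteq> 3"
    "(4 * k + 1) div 4 = k" "(4 * k + 3) div 4 = k" "(2 * k + 2) div 2 = k + 1"
    by presburger+
  then show "two_odd_one_even_inv (4 * k + 1) = 3 * k + 1"
    "two_odd_one_even_inv (4 * k + 3) = 3 * k + 2"
    "two_odd_one_even_inv (2 * k + 2) = 3 * k + 3"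
    unfolding two_odd_one_even_inv_def by simp_all
qed

lemma two_odd_one_even_cases:
  assumes "1 \<le> n"
  obtains k where "n = 3 * k + 1" "two_odd_one_even n = 4 * k + 1"
    | k where "n = 3 * k + 2" "two_odd_one_even n = 4 * k + 3"
    | k where "n = 3 * k + 3" "two_odd_one_even n = 2 * k + 2"
proof -
  have "\<exists>k. n = 3 * k + 1 \<or> n = 3 * k + 2 \<or> n = 3 * k + 3"
    using assms by presburger
  then show ?thesis using that two_odd_one_even_values by blast
qed

lemma two_odd_one_even_inv_cases:
  assumes "1 \<le> v"
  obtains k where "v = 4 * k + 1" "two_odd_one_even_inv v = 3 * k + 1"
    | k where "v = 4 * k + 3" "two_odd_one_even_inv v = 3 * k + 2"
    | k where "v = 2 * k + 2" "two_odd_one_even_inv v = 3 * k + 3"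
proof -
  have "\<exists>k. v = 4 * k + 1 \<or> v = 4 * k + 3 \<or> v = 2 * k + 2"
    using assms by presburger
  then show ?thesis using that two_odd_one_even_inv_values by blast
qed

lemma perm_pos_two_odd_one_even: "perm_pos two_odd_one_even"
  unfolding perm_pos_def
proof (rule bij_betw_byWitness[where f' = two_odd_one_even_inv])
  show "\<forall>n\<in>{1..}. two_odd_one_even_inv (two_odd_one_even n) = n"
  proof
    fix n :: nat
    assume "n \<in> {1..}"
    then have "1 \<le> n" by simp
    then show "two_odd_one_even_inv (two_odd_one_even n) = n"
      by (cases rule: two_odd_one_even_cases) (simp_all only: two_odd_one_even_inv_values)
  qed
  show "\<forall>v\<in>{1..}. two_odd_one_even (two_odd_one_even_inv v) = v"
  proof
    fix v :: nat
    assume "v \<in> {1..}"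
    then have "1 \<le> v" by simp
    then show "two_odd_one_even (two_odd_one_even_inv v) = v"
      by (cases rule: two_odd_one_even_inv_cases) (simp_all only: two_odd_one_even_values)
  qed
  show "two_odd_one_even ` {1..} \<subseteq> {1..}"
  proof
    fix v assume "v \<in> two_odd_one_even ` {1..}"
    then obtain n where "1 \<le> n" "v = two_odd_one_even n" by auto
    then show "v \<in> {1..}" by (cases rule: two_odd_one_even_cases) auto
  qed
  show "two_odd_one_even_inv ` {1..} \<subseteq> {1..}"
  proof
    fix n assume "n \<in> two_odd_one_even_inv ` {1..}"
    then obtain v where "1 \<le> v" "n = two_odd_one_even_inv v" by auto
    then show "n \<in> {1..}" by (cases rule: two_odd_one_even_inv_cases) auto
  qed
qed

(* Odd values at positions 3k+1, 3k+2 are 4k+1, 4k+3 (increasing), and the even value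
   2k+2 at position 3k+3 is followed only by odd values >= 4k+5. *)
lemma parity_separated_two_odd_one_even: "parity_separated two_odd_one_even"
  unfolding parity_separated_def
proof (intro allI impI)
  fix p q :: nat
  assume p: "1 \<le> p" and pq: "p < q" and odd_q: "odd (two_odd_one_even q)"
  then have q: "1 \<le> q" by simp
  show "if odd (two_odd_one_even p) then two_odd_one_even p < two_odd_one_even q
        else 2 * two_odd_one_even p < two_odd_one_even q"
    by (rule two_odd_one_even_cases[OF p]; rule two_odd_one_even_cases[OF q];
        use pq odd_q in auto)
qed

theorem theorem2:
  shows "\<exists>a. perm_pos a \<and> (\<forall>d :: int. odd d \<longrightarrow> \<not> has_ap_subseq a 4 d)"
  using perm_pos_two_odd_one_even
    parity_separated_no_odd_ap[OF parity_separated_two_odd_one_even] by blast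

end
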